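(* Let $(M,d)$ be a metric space, $\mathsf{P}\subseteq M$ a set of $n$ points, $1\le\ell\le k\le n$ integers with $m=\lfloor k/\ell\rfloor\ge 2$. Let $Q=\{q_1,\dots,q_m\}$ be the output of Gonzalez's algorithm on $\mathsf{P}$ with $m$ centers, and let $r_m=d(q_m,\{q_1,\dots,q_{m-1}\})$. Let $C\subseteq\mathsf{P}$ with $|C|=k$ and $C\supseteq\bigcup_{i=1}^m N_{\mathsf{P}}(q_i,\ell)$, let $r_{\mathrm{alg}}=\max_{p\in\mathsf{P}} d_C(p,\ell)$ and $r_{\mathrm{opt}}=\min_{C'\subseteq\mathsf{P},|C'|=k}\max_{p\in\mathsf{P}} d_{C'}(p,\ell)$. Then $r_{\mathrm{alg}}\le r_m+r_{\mathrm{opt}}$.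
   Context: Gonzalez's algorithm with $m$ centers: $q_1\in\mathsf{P}$ is arbitrary, and for $i=2,\dots,m$, $q_i$ is a point of $\mathsf{P}$ maximizing $d(p,\{q_1,\dots,q_{i-1}\})$ over $p\in\mathsf{P}$ (distance to a set = distance to its nearest element). For a finite $S\subseteq M$ and $1\le i\le|S|$, $d_S(p,i)$ is the radius of the smallest closed ball centered at $p$ containing at least $i$ points of $S$; nearest neighbors are ordered lexicographically by $(d(p,s),\text{index of }s)$ and $N_S(p,i)$ is the set of the first $i$ points of $S$ in this order. *)

theory Defs
  imports "HOL-Analysis.Analysis"
begin

definition dist_set :: "'a::metric_space \<Rightarrow> 'a set \<Rightarrow> real" where
  "dist_set p S = Min ((\<lambda>s. dist p s) ` S)"

definition dS :: "'a::metric_space set \<Rightarrow> 'a \<Rightarrow> nat \<Rightarrow> real" where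
  "dS S p i = Inf {r. 0 \<le> r \<and> i \<le> card (S \<inter> cball p r)}"

definition nn_less :: "('a \<Rightarrow> nat) \<Rightarrow> 'a::metric_space \<Rightarrow> 'a \<Rightarrow> 'a \<Rightarrow> bool" where
  "nn_less idx p t s \<longleftrightarrow> dist p t < dist p s \<or> (dist p t = dist p s \<and> idx t < idx s)"

definition NS :: "('a \<Rightarrow> nat) \<Rightarrow> 'a::metric_space set \<Rightarrow> 'a \<Rightarrow> nat \<Rightarrow> 'a set" where
  "NS idx S p i = {s \<in> S. card {t \<in> S. nn_less idx p t s} < i}"

definition gonzalez :: "'a::metric_space set \<Rightarrow> nat \<Rightarrow> (nat \<Rightarrow> 'a) \<Rightarrow> bool" where
  "gonzalez P m q \<longleftrightarrow> q 1 \<in> P \<and>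
     (\<forall>i\<in>{2..m}. q i \<in> P \<and>
        (\<forall>p\<in>P. dist_set p (q ` {1..<i}) \<le> dist_set (q i) (q ` {1..<i})))"

end

theory Submission imports Defs begin

text \<open>Fix p \<in> P. By the greedy choice of q_m some earlier center q_i lies within r_m of p.
  Let C' be optimal. The l nearest neighbours of q_i in P lie in C, and since C' \<subseteq> P has l
  points within d_C'(q_i,l) \<le> r_opt of q_i, so do these l nearest neighbours. By the triangle
  inequality the ball of radius r_m + r_opt around p contains l points of C.\<close>

lemma dS_le:
  assumes "0 \<le> r" "i \<le> card (S \<inter> cball p r)"
  shows "dS S p i \<le> r"
  unfolding dS_def
  by (rule cInf_lower) (use assms in \<open>auto intro: bdd_belowI[where m=0]\<close>)

lemma dist_NS_le_dS:
  assumes "finite P" "S \<subseteq> P" "i \<le> card S" "s \<in> NS idx P c i"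
  shows "dist c s \<le> dS S c i"
  unfolding dS_def
proof (rule cInf_greatest)
  have "finite S" using assms finite_subset by blast
  then obtain e where "\<forall>y\<in>S. dist c y \<le> e"
    using bounded_any_center finite_imp_bounded by blast
  hence "S \<inter> cball c (max e 0) = S" by auto
  thus "{r. 0 \<le> r \<and> i \<le> card (S \<inter> cball c r)} \<noteq> {}"
    using assms(3) by (metis (mono_tags, lifting) empty_iff max.cobounded2 mem_Collect_eq)
next
  fix r assume r: "r \<in> {r. 0 \<le> r \<and> i \<le> card (S \<inter> cball c r)}"
  show "dist c s \<le> r"
  proof (rule ccontr)
    assume "\<not> dist c s \<le> r"
    hence "S \<inter> cball c r \<subseteq> {t \<in> P. nn_less idx c t s}"
      using assms(2) by (auto simp: nn_less_def)
    hence "card (S \<inter> cball c r) \<le> card {t \<in> P. nn_less idx c t s}"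
      using assms(1) by (intro card_mono) auto
    moreover have "card {t \<in> P. nn_less idx c t s} < i"
      using assms(4) by (simp add: NS_def)
    ultimately show False using r by simp
  qed
qed

text \<open>Injectivity of idx makes the nearest-neighbour order total on P, so the rank of a point
  (the number of its predecessors) is a bijection from P onto {..<card P}.\<close>

lemma card_NS:
  assumes "finite P" "inj_on idx P" "i \<le> card P"
  shows "card (NS idx P c i) = i"
proof -
  define rank where "rank s = card {t \<in> P. nn_less idx c t s}" for s
  have rank_less: "rank s < rank s'" if "s \<in> P" "s' \<in> P" "nn_less idx c s s'" for s s'
  proof -
    have "{t \<in> P. nn_less idx c t s} \<subset> {t \<in> P. nn_less idx c t s'}"
      using that by (auto simp: nn_less_def)
    thus ?thesis unfolding rank_def using assms(1) by (intro psubset_card_mono) auto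
  qed
  have total: "nn_less idx c s s' \<or> nn_less idx c s' s" if "s \<in> P" "s' \<in> P" "s \<noteq> s'" for s s'
    using that assms(2) unfolding nn_less_def inj_on_def
    by (metis linorder_neqE_linordered_idom linorder_neqE_nat)
  have inj: "inj_on rank P"
    by (rule inj_onI) (metis total rank_less less_irrefl)
  have "rank ` P \<subseteq> {..<card P}"
  proof
    fix x assume "x \<in> rank ` P"
    then obtain s where s: "s \<in> P" "x = rank s" by auto
    have "{t \<in> P. nn_less idx c t s} \<subset> P" using s by (auto simp: nn_less_def)
    thus "x \<in> {..<card P}" using s assms(1) unfolding rank_def by (auto intro: psubset_card_mono)
  qed
  hence "rank ` P = {..<card P}"
    using assms(1) card_image[OF inj] by (intro card_subset_eq) auto
  hence "bij_betw rank P {..<card P}" using inj by (simp add: bij_betw_def)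
  hence "bij_betw rank {s \<in> P. rank s < i} {..<i}"
    using assms(3) unfolding bij_betw_def inj_on_def by (auto simp: image_iff)
  moreover have "NS idx P c i = {s \<in> P. rank s < i}" by (auto simp: NS_def rank_def)
  ultimately show ?thesis by (simp add: bij_betw_same_card)
qed

lemma dS_le_dist_add_dS:
  assumes "finite P" "inj_on idx P" "1 \<le> l"
    and "C \<subseteq> P" "NS idx P c l \<subseteq> C"
    and "C' \<subseteq> P" "l \<le> card C'"
    and "dist p c \<le> r"
  shows "dS C p l \<le> r + dS C' c l"
proof (rule dS_le)
  have near: "dist p s \<le> r + dS C' c l" if "s \<in> NS idx P c l" for s
    using dist_triangle[of p s c] dist_NS_le_dS[OF assms(1,6,7) that] assms(8) by linarith
  have card_NS_l: "card (NS idx P c l) = l"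
    using card_NS[OF assms(1,2)] card_mono[OF assms(1,6)] assms(7) by simp
  then obtain s where "s \<in> NS idx P c l" using assms(3) by fastforce
  thus "0 \<le> r + dS C' c l" using near[of s] zero_le_dist[of p s] by linarith
  have "NS idx P c l \<subseteq> C \<inter> cball p (r + dS C' c l)" using assms(5) near by auto
  thus "l \<le> card (C \<inter> cball p (r + dS C' c l))"
    using card_NS_l assms(1,4) by (metis card_mono finite_Int finite_subset)
qed

lemma gonzalez_in:
  assumes "gonzalez P m q" "i \<in> {1..m}"
  shows "q i \<in> P"
  using assms unfolding gonzalez_def by (cases "i = 1") auto

lemma gonzalez_covering:
  assumes "gonzalez P m q" "2 \<le> m" "p \<in> P"
  obtains i where "i \<in> {1..<m}" "dist p (q i) \<le> dist_set (q m) (q ` {1..<m})"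
proof -
  have "dist_set p (q ` {1..<m}) \<le> dist_set (q m) (q ` {1..<m})"
    using assms unfolding gonzalez_def by auto
  moreover have "dist_set p (q ` {1..<m}) \<in> dist p ` q ` {1..<m}"
    unfolding dist_set_def using assms(2) by (intro Min_in) auto
  ultimately show ?thesis using that by auto
qed

theorem mainTheorem9:
  fixes P C :: "'a::metric_space set" and idx :: "'a \<Rightarrow> nat"
    and n k l m :: nat and q :: "nat \<Rightarrow> 'a"
  assumes "finite P" and "card P = n"
    and "inj_on idx P"
    and "1 \<le> l" and "l \<le> k" and "k \<le> n"
    and "m = k div l" and "2 \<le> m"
    and "gonzalez P m q"
    and "C \<subseteq> P" and "card C = k"
    and "(\<Union>i\<in>{1..m}. NS idx P (q i) l) \<subseteq> C"
  shows "(MAX p\<in>P. dS C p l)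
         \<le> dist_set (q m) (q ` {1..<m})
           + (MIN C'\<in>{C'. C' \<subseteq> P \<and> card C' = k}. MAX p\<in>P. dS C' p l)"
proof -
  define Cs where "Cs = {C'. C' \<subseteq> P \<and> card C' = k}"
  have "finite Cs" "C \<in> Cs" using assms(1,10,11) by (auto simp: Cs_def)
  then obtain C' where C': "C' \<in> Cs"
    and opt: "(MIN C'\<in>Cs. MAX p\<in>P. dS C' p l) = (MAX p\<in>P. dS C' p l)"
    by (metis (no_types, lifting) Min_in empty_iff finite_imageI image_iff image_is_empty)
  have "dS C p l \<le> dist_set (q m) (q ` {1..<m}) + (MAX p\<in>P. dS C' p l)" if p: "p \<in> P" for p
  proof -
    obtain i where i: "i \<in> {1..<m}" "dist p (q i) \<le> dist_set (q m) (q ` {1..<m})"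
      using gonzalez_covering[OF assms(9,8) p] .
    have NS_in_C: "NS idx P (q i) l \<subseteq> C" using assms(12) i(1) by fastforce
    have "dS C' (q i) l \<le> (MAX p\<in>P. dS C' p l)"
      using assms(1) gonzalez_in[OF assms(9), of i] i(1) by (intro Max_ge) auto
    moreover have "dS C p l \<le> dist_set (q m) (q ` {1..<m}) + dS C' (q i) l"
      using i C' NS_in_C assms(1,3,4,5,10) by (intro dS_le_dist_add_dS[of P idx]) (auto simp: Cs_def)
    ultimately show ?thesis by linarith
  qed
  thus ?thesis
    unfolding Cs_def[symmetric] opt using assms(1,2,4,5,6) by (subst Max_le_iff) auto
qed

end
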